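(* Fix integers $q\ge2$, $\ell\ge1$, $L\ge\ell$, a real $r\in[0,1-\frac{\ell}{L+1})$ and $\varepsilon>0$. There is a function $\delta:\mathbb{N}\to\mathbb{R}$ with $\delta(n)\to0$ as $n\to\infty$ such that, for every $n$ with $rn\in\mathbb{N}$, if there exists an $(r,\ell,L)$ list-recoverable code $C\subseteq[q]^n$ of rate at least $1-r-\varepsilon$ (i.e. $|C|\ge q^{(1-r-\varepsilon)n}$), then $L\ge\frac{\ell r}{\varepsilon}+\ell-1+\delta(n)$.
   Context: $\binom{[q]}{\le\ell}$ is the family of subsets of $[q]=\{1,\dots,q\}$ of size at most $\ell$. The rate of $C\subseteq[q]^n$ is $\log_q(|C|)/n$. $C$ is $(r,\ell,L)$ list-recoverable if for all $S_1,\dots,S_n\in\binom{[q]}{\le\ell}$, at most $L$ codewords $c\in C$ have $c_i\notin S_i$ for at most $rn$ coordinates $i$. *)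

theory Defs
  imports Complex_Main
begin

definition words :: "nat \<Rightarrow> nat \<Rightarrow> nat list set" where
  "words q n = {c. length c = n \<and> set c \<subseteq> {1..q}}"

definition list_recoverable ::
  "nat \<Rightarrow> nat \<Rightarrow> real \<Rightarrow> nat \<Rightarrow> nat \<Rightarrow> nat list set \<Rightarrow> bool" where
  "list_recoverable q n r l L C \<longleftrightarrow>
     C \<subseteq> words q n \<and>
     (\<forall>S :: nat \<Rightarrow> nat set. (\<forall>i<n. S i \<subseteq> {1..q} \<and> card (S i) \<le> l) \<longrightarrow>
        card {c \<in> C. real (card {i. i < n \<and> c ! i \<notin> S i}) \<le> r * real n} \<le> L)"

end

theory Submission
  imports Defs
begin

text \<open>
  If |C| > L q^k, pigeonholing on the first k coordinates yields L + 1 codewords that agree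
  there. On the remaining m = n - k coordinates, the input list at coordinate t holds the
  symbols of the l codewords whose indices form the t-th block of l consecutive residues
  modulo L + 1. Every codeword then lies in at least \<lfloor>l m / (L + 1)\<rfloor> of these lists, so it
  disagrees with them in at most about m (L + 1 - l) / (L + 1) coordinates. Taking
  m \<approx> r n (L + 1) / (L + 1 - l) puts all L + 1 codewords within radius r n, so
  list-recoverability forces |C| \<le> L q^(n - m). For L < l r / \<epsilon> + l - 1 this contradicts
  the rate assumption for all large n, and the finitely many small n are absorbed into \<delta>.
\<close>

lemma card_residue_class_ge:
  assumes "j < (d::nat)"
  shows "N div d \<le> card {u. u < N \<and> u mod d = j}"
proof -
  have "(\<lambda>a. a * d + j) ` {..<N div d} \<subseteq> {u. u < N \<and> u mod d = j}"
  proof safe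
    fix a assume "a < N div d"
    then have "(a + 1) * d \<le> N"
      using assms less_eq_div_iff_mult_less_eq[of d "a + 1" N] by simp
    then show "a * d + j < N" using assms by simp
  qed (use assms in auto)
  moreover have "inj_on (\<lambda>a. a * d + j) {..<N div d}"
    using assms by (auto simp: inj_on_def)
  ultimately show ?thesis
    using card_inj_on_le[of _ _ "{u. u < N \<and> u mod d = j}"] by fastforce
qed

lemma eq_if_mod_eq_div_eq:
  fixes u v d l :: nat
  assumes "u mod d = v mod d" "u div l = v div l" "0 < l" "l \<le> d"
  shows "u = v"
  using assms
proof (induction u v rule: linorder_wlog)
  case (le u v)
  obtain s where s: "v = u + d * s"
    using mod_eq_nat2E[OF le.prems(1) le.hyps] .
  show "u = v"
  proof (cases "s = 0")
    case False
    then have "l \<le> d * s"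
      using le.prems(4) by (simp add: le_trans[OF _ mult_le_mono2[of 1 s d]])
    then have "u div l + 1 \<le> v div l"
      using s le.prems(3) div_le_mono[of "u + l" v l] by simp
    then show ?thesis using le.prems(2) by simp
  qed (use s in simp)
next
  case (sym u v)
  then show ?case by (simp add: eq_commute)
qed

definition cyclic_window :: "nat \<Rightarrow> nat \<Rightarrow> nat \<Rightarrow> nat set" where
  "cyclic_window d l t = (\<lambda>s. (t * l + s) mod d) ` {..<l}"

lemma card_cyclic_window_le: "card (cyclic_window d l t) \<le> l"
  unfolding cyclic_window_def using card_image_le[of "{..<l}"] by simp

lemma cyclic_window_subset: "0 < d \<Longrightarrow> cyclic_window d l t \<subseteq> {..<d}"
  unfolding cyclic_window_def by auto

lemma card_cyclic_windows_containing_ge: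
  assumes "j < d" "l \<le> d"
  shows "l * m div d \<le> card {t. t < m \<and> j \<in> cyclic_window d l t}"
proof (cases "l = 0")
  case False
  let ?U = "{u. u < l * m \<and> u mod d = j}"
  have "(\<lambda>u. u div l) ` ?U \<subseteq> {t. t < m \<and> j \<in> cyclic_window d l t}"
  proof
    fix t assume "t \<in> (\<lambda>u. u div l) ` ?U"
    then obtain u where u: "u < l * m" "u mod d = j" "t = u div l"
      by blast
    have "t < m"
      using u by (simp add: less_mult_imp_div_less mult.commute)
    moreover have "j \<in> cyclic_window d l t"
      unfolding cyclic_window_def using False u by (intro image_eqI[of _ _ "u mod l"]) auto
    ultimately show "t \<in> {t. t < m \<and> j \<in> cyclic_window d l t}"
      by blast
  qed
  moreover have "inj_on (\<lambda>u. u div l) ?U"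
  proof (rule inj_onI)
    fix u v assume "u \<in> ?U" "v \<in> ?U" "u div l = v div l"
    with False assms(2) show "u = v"
      by (intro eq_if_mod_eq_div_eq[of u d v l]) auto
  qed
  ultimately have "card ?U \<le> card {t. t < m \<and> j \<in> cyclic_window d l t}"
    by (intro card_inj_on_le) auto
  then show ?thesis
    using card_residue_class_ge[OF assms(1), of "l * m"] by linarith
qed simp

lemma finite_words: "finite (words q n)"
  unfolding words_def using finite_lists_length_eq[of "{1..q}" n] by (simp add: conj_commute)

lemma card_words: "card (words q n) = q ^ n"
  unfolding words_def using card_lists_length_eq[of "{1..q}" n] by (simp add: conj_commute)

lemma take_in_words: "c \<in> words q n \<Longrightarrow> k \<le> n \<Longrightarrow> take k c \<in> words q k"
  unfolding words_def by (auto dest: in_set_takeD)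

lemma exists_cyclic_input_lists:
  fixes g :: "nat \<Rightarrow> nat list"
  assumes "1 \<le> l" "l \<le> d" "m \<le> n"
    and g_words: "\<And>j. j < d \<Longrightarrow> g j \<in> words q n"
    and g_prefix: "\<And>j. j < d \<Longrightarrow> take (n - m) (g j) = take (n - m) (g 0)"
  shows "\<exists>S. (\<forall>i<n. S i \<subseteq> {1..q} \<and> card (S i) \<le> l) \<and>
    (\<forall>j<d. card {i. i < n \<and> g j ! i \<notin> S i} + l * m div d \<le> m)"
proof -
  define k where "k = n - m"
  define S where "S i = (\<lambda>j. g j ! i) ` (if i < k then {0} else cyclic_window d l (i - k))" for i
  have window: "cyclic_window d l t \<subseteq> {..<d}" for t
    using assms(1,2) by (intro cyclic_window_subset) simp
  have "S i \<subseteq> {1..q} \<and> card (S i) \<le> l" if "i < n" for i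
  proof
    have "g j ! i \<in> {1..q}" if "j < d" for j
      using g_words[OF that] \<open>i < n\<close> unfolding words_def by (auto dest: nth_mem)
    then show "S i \<subseteq> {1..q}"
      unfolding S_def using window assms(1,2) by (auto simp: subset_iff)
    have "card (S i) \<le> card (if i < k then {0} else cyclic_window d l (i - k))"
      unfolding S_def by (intro card_image_le) (simp add: finite_subset[OF window])
    then show "card (S i) \<le> l"
      using card_cyclic_window_le[of d l "i - k"] assms(1) by (auto split: if_splits)
  qed
  moreover have "card {i. i < n \<and> g j ! i \<notin> S i} + l * m div d \<le> m" if "j < d" for j
  proof -
    define T where "T = {t. t < m \<and> j \<in> cyclic_window d l t}"
    have "{i. i < n \<and> g j ! i \<notin> S i} \<subseteq> (\<lambda>t. t + k) ` ({..<m} - T)"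
    proof safe
      fix i assume i: "i < n" "g j ! i \<notin> S i"
      have "g j ! i = g 0 ! i" if "i < k"
        using g_prefix[OF \<open>j < d\<close>] that nth_take[of i k] unfolding k_def by metis
      then have "\<not> i < k"
        using i unfolding S_def by auto
      moreover have "i - k \<notin> T"
        using i \<open>\<not> i < k\<close> unfolding S_def T_def by auto
      ultimately show "i \<in> (\<lambda>t. t + k) ` ({..<m} - T)"
        using i assms(3) by (intro image_eqI[of _ _ "i - k"]) (auto simp: k_def)
    qed
    then have "card {i. i < n \<and> g j ! i \<notin> S i} \<le> card ((\<lambda>t. t + k) ` ({..<m} - T))"
      by (rule card_mono[rotated]) simp
    also have "\<dots> \<le> card ({..<m} - T)"
      by (rule card_image_le) simp
    also have "\<dots> = m - card T"
      by (subst card_Diff_subset) (auto simp: T_def)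
    finally show ?thesis
      using card_cyclic_windows_containing_ge[OF \<open>j < d\<close> assms(2), of m] card_mono[of "{..<m}" T]
      unfolding T_def by fastforce
  qed
  ultimately show ?thesis by blast
qed

lemma card_prefix_fibre_le:
  assumes LR: "list_recoverable q n r l L C" and "1 \<le> l" "l \<le> L" "m \<le> n"
    and radius: "real m \<le> r * real n + real (l * m div (L + 1))"
  shows "card {c \<in> C. take (n - m) c = y} \<le> L"
proof (rule ccontr)
  let ?F = "{c \<in> C. take (n - m) c = y}"
  let ?close = "\<lambda>S. {c \<in> C. real (card {i. i < n \<and> c ! i \<notin> S i}) \<le> r * real n}"
  assume "\<not> card ?F \<le> L"
  then have "L + 1 \<le> card ?F"
    by simp
  then obtain G where G: "G \<subseteq> ?F" "card G = L + 1" "finite G"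
    by (rule obtain_subset_with_card_n)
  then obtain g where g: "bij_betw g {0..<L + 1} G"
    using ex_bij_betw_nat_finite by metis
  have CW: "C \<subseteq> words q n"
    using LR unfolding list_recoverable_def by blast
  have gC: "g j \<in> C" "take (n - m) (g j) = y" if "j < L + 1" for j
    using bij_betwE[OF g] G(1) that by auto
  have gW: "g j \<in> words q n" and gP: "take (n - m) (g j) = take (n - m) (g 0)" if "j < L + 1" for j
    using gC CW that by auto
  have "l \<le> L + 1"
    using assms(3) by simp
  then obtain S where S: "\<forall>i<n. S i \<subseteq> {1..q} \<and> card (S i) \<le> l"
    and close: "\<forall>j<L + 1. card {i. i < n \<and> g j ! i \<notin> S i} + l * m div (L + 1) \<le> m"
    using exists_cyclic_input_lists[of l "L + 1" m n g q] assms(2,4) gW gP by blast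
  have G_close: "G \<subseteq> ?close S"
  proof
    fix c assume "c \<in> G"
    then obtain j where j: "j < L + 1" "c = g j"
      using g unfolding bij_betw_def by auto
    then have "real (card {i. i < n \<and> c ! i \<notin> S i}) + real (l * m div (L + 1)) \<le> real m"
      using close by (metis of_nat_add of_nat_le_iff)
    then show "c \<in> ?close S"
      using gC(1) j radius by auto
  qed
  have "finite (?close S)"
    using finite_subset[OF CW finite_words] by simp
  then have "card G \<le> card (?close S)"
    using G_close by (rule card_mono)
  moreover have "card (?close S) \<le> L"
    using LR S unfolding list_recoverable_def by blast
  ultimately show False
    using G(2) by simp
qed

lemma card_list_recoverable_le:
  assumes LR: "list_recoverable q n r l L C" and "1 \<le> l" "l \<le> L" "m \<le> n"
    and "real m \<le> r * real n + real (l * m div (L + 1))"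
  shows "card C \<le> L * q ^ (n - m)"
proof -
  let ?fibre = "\<lambda>y. {c \<in> C. take (n - m) c = y}"
  have "C \<subseteq> words q n"
    using LR unfolding list_recoverable_def by blast
  then have "C \<subseteq> (\<Union>y \<in> words q (n - m). ?fibre y)"
    using take_in_words[OF _ diff_le_self] by blast
  moreover have "finite (\<Union>y \<in> words q (n - m). ?fibre y)"
    using finite_subset[OF \<open>C \<subseteq> words q n\<close> finite_words] finite_words by simp
  ultimately have "card C \<le> card (\<Union>y \<in> words q (n - m). ?fibre y)"
    by (rule card_mono[rotated])
  also have "\<dots> \<le> (\<Sum>y \<in> words q (n - m). card (?fibre y))"
    using finite_words by (rule card_UN_le)
  also have "\<dots> \<le> (\<Sum>y \<in> words q (n - m). L)"
    using card_prefix_fibre_le[OF assms] by (intro sum_mono)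
  finally show ?thesis
    by (simp add: card_words mult.commute)
qed

lemma eventually_exists_split_length:
  fixes r \<epsilon> :: real
  assumes "l \<le> L" "r < 1 - real l / (real L + 1)" "\<epsilon> > 0"
    and "real L < real l * r / \<epsilon> + real l - 1"
  shows "eventually (\<lambda>n. \<exists>m\<le>n. real L + (r + \<epsilon>) * real n \<le> real m \<and>
    real m \<le> r * real n + real (l * m div (L + 1))) sequentially"
proof -
  define D where "D = real L + 1 - real l"
  define a where "a = (real L + 1) / D"
  define \<gamma> where "\<gamma> = r * a - r - \<epsilon>"
  have "D > 0" "a > 0"
    using assms(1) by (auto simp: D_def a_def)
  have "D * \<epsilon> < real l * r"
    using assms(3,4) by (simp add: D_def field_simps)
  then have "\<gamma> > 0"
    using \<open>D > 0\<close> assms(3) by (simp add: \<gamma>_def a_def D_def field_simps)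
  have "0 < real l * r"
    using \<open>D * \<epsilon> < real l * r\<close> \<open>D > 0\<close> assms(3) by (smt (verit) mult_pos_pos)
  then have "r > 0"
    by (simp add: zero_less_mult_iff)
  have "r * a \<le> 1"
    using assms(2) \<open>D > 0\<close> by (simp add: a_def D_def field_simps)
  have "filterlim (\<lambda>n. \<gamma> * real n) at_top sequentially"
    using filterlim_tendsto_pos_mult_at_top[OF tendsto_const \<open>\<gamma> > 0\<close> filterlim_real_sequentially] .
  then have "eventually (\<lambda>n. real L + a + 1 \<le> \<gamma> * real n) sequentially"
    by (simp add: filterlim_at_top)
  then show ?thesis
  proof (rule eventually_mono)
    fix n :: nat assume n: "real L + a + 1 \<le> \<gamma> * real n"
    define x where "x = (r * real n - 1) * a"
    define m where "m = nat \<lfloor>x\<rfloor>"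
    have "real L + (r + \<epsilon>) * real n \<le> x - 1"
      using n by (simp add: x_def \<gamma>_def algebra_simps)
    moreover have "0 \<le> (r + \<epsilon>) * real n"
      using \<open>r > 0\<close> assms(3) by simp
    ultimately have "x - 1 < real m" "real m \<le> x"
      unfolding m_def by linarith+
    have "x \<le> real n"
      using \<open>r * a \<le> 1\<close> \<open>a > 0\<close> mult_right_mono[OF \<open>r * a \<le> 1\<close>, of "real n"]
      by (simp add: x_def algebra_simps)
    have "real (l * m) / real (L + 1) - 1 < real (l * m div (L + 1))"
      by (metis floor_divide_of_nat_eq of_int_of_nat_eq real_of_int_floor_gt_diff_one)
    moreover have "real m - real (l * m) / real (L + 1) = real m / a"
      using \<open>D > 0\<close> by (simp add: a_def D_def field_simps)
    moreover have "real m / a \<le> r * real n - 1"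
      using \<open>real m \<le> x\<close> \<open>a > 0\<close> by (simp add: x_def field_simps)
    ultimately have "real m \<le> r * real n + real (l * m div (L + 1))"
      by linarith
    then show "\<exists>m\<le>n. real L + (r + \<epsilon>) * real n \<le> real m \<and>
        real m \<le> r * real n + real (l * m div (L + 1))"
      using \<open>x - 1 < real m\<close> \<open>real m \<le> x\<close> \<open>x \<le> real n\<close> \<open>real L + (r + \<epsilon>) * real n \<le> x - 1\<close>
      by (intro exI[of _ m]) auto
  qed
qed

lemma eventually_no_large_list_recoverable_code:
  fixes r \<epsilon> :: real
  assumes "q \<ge> 2" "1 \<le> l" "l \<le> L" "r < 1 - real l / (real L + 1)" "\<epsilon> > 0"
    and "real L < real l * r / \<epsilon> + real l - 1"
  shows "eventually (\<lambda>n. \<forall>C. list_recoverable q n r l L C \<longrightarrow>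
    real (card C) < real q powr ((1 - r - \<epsilon>) * real n)) sequentially"
  using eventually_exists_split_length[OF assms(3-6)]
proof (rule eventually_mono, safe)
  fix n m C
  assume "m \<le> n" and long: "real L + (r + \<epsilon>) * real n \<le> real m"
    and radius: "real m \<le> r * real n + real (l * m div (L + 1))"
    and LR: "list_recoverable q n r l L C"
  have "L < q ^ L"
    using less_exp[of L] power_mono[of 2 q L] assms(1) by linarith
  have "card C \<le> L * q ^ (n - m)"
    using card_list_recoverable_le[OF LR assms(2,3) \<open>m \<le> n\<close> radius] .
  also have "\<dots> < q ^ L * q ^ (n - m)"
    using \<open>L < q ^ L\<close> assms(1) by simp
  finally have "real (card C) < real q ^ (L + (n - m))"
    by (metis of_nat_less_iff of_nat_power power_add)
  also have "\<dots> = real q powr real (L + (n - m))"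
    using assms(1) powr_realpow[of "real q" "L + (n - m)"] by simp
  also have "\<dots> \<le> real q powr ((1 - r - \<epsilon>) * real n)"
    using assms(1) long \<open>m \<le> n\<close> by (intro powr_mono) (auto simp: of_nat_diff algebra_simps)
  finally show "real (card C) < real q powr ((1 - r - \<epsilon>) * real n)" .
qed

theorem corollary5p2:
  fixes q l L :: nat and r \<epsilon> :: real
  assumes "q \<ge> 2" and "l \<ge> 1" and "L \<ge> l"
    and "0 \<le> r" and "r < 1 - real l / (real L + 1)" and "\<epsilon> > 0"
  shows "\<exists>\<delta> :: nat \<Rightarrow> real. \<delta> \<longlonglongrightarrow> 0 \<and>
    (\<forall>n. r * real n \<in> \<nat> \<longrightarrow>
      (\<exists>C. list_recoverable q n r l L C \<and>
            real (card C) \<ge> real q powr ((1 - r - \<epsilon>) * real n)) \<longrightarrow>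
      real L \<ge> real l * r / \<epsilon> + real l - 1 + \<delta> n)"
proof (cases "real l * r / \<epsilon> + real l - 1 \<le> real L")
  case True
  then show ?thesis
    by (intro exI[of _ "\<lambda>_. 0"]) simp
next
  case False
  then obtain N where N: "\<And>n C. N \<le> n \<Longrightarrow> list_recoverable q n r l L C \<Longrightarrow>
      real (card C) < real q powr ((1 - r - \<epsilon>) * real n)"
    using eventually_no_large_list_recoverable_code[of q l L r \<epsilon>] assms
    unfolding eventually_sequentially by (meson not_le)
  define \<delta> where "\<delta> n = (if n < N then real L - (real l * r / \<epsilon> + real l - 1) else 0)" for n
  have "\<delta> \<longlonglongrightarrow> 0"
    unfolding \<delta>_def by (intro tendsto_eventually eventually_sequentiallyI[of N]) simp
  moreover have "real L \<ge> real l * r / \<epsilon> + real l - 1 + \<delta> n"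
    if "list_recoverable q n r l L C" "real (card C) \<ge> real q powr ((1 - r - \<epsilon>) * real n)" for n C
    using N[OF _ that(1)] that(2) by (force simp: \<delta>_def)
  ultimately show ?thesis
    by blast
qed

end
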